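(* Let $q$ be a positive integer and $\lambda$ be a partition. Then \[c^{(q)}_\lambda=\left|\mathscr{W}^{(q)}_{r(\lambda)}\right|\cdot\frac{\prod_{i=0}^{q-1}r_i(\lambda)!}{\prod_{s\geq1}n_s(\lambda)!}\cdot\binom{\ell(\lambda)-1}{r_0(\lambda)}.\] In particular, $c^{(q)}_\lambda\neq0$ if and only if $\mathscr{W}^{(q)}_{r(\lambda)}\neq\emptyset$.
   Context: A composition of $n\in\mathbb{N}_0$ is a finite sequence $\delta=(\delta_1,\ldots,\delta_s)$ of positive integers with $\sum_i\delta_i=n$; write $\ell(\delta)=s$, $|\delta|=n$; the unique composition of $0$ is the empty composition. A partition is a composition with $\delta_1\geq\cdots\geq\delta_s$. Partial sums: $\delta^+_j=\sum_{i=1}^j\delta_i$. For a positive integer $d$, $n_d(\delta)=|\{i:\delta_i=d\}|$. For a positive integer $q$, a composition $\delta$ is called $q'$-cumulative if it is nonempty and $q\nmid\delta^+_j$ for all $1\leq j\leq\ell(\delta)$ (the empty composition is not regarded as $q'$-cumulative). For a partition $\lambda$, $\mathscr{C}(\lambda)$ is the set of compositions that are rearrangements of $\lambda$, and $c^{(q)}_\lambda$ is the number of $q'$-cumulative $\delta\in\mathscr{C}(\lambda)$. For $0\leq j\leq q-1$, $r_j(\delta)=\sum_{i\equiv j\,(\mathrm{mod}\ q)}n_i(\delta)$, and $r(\delta)=(r_1(\delta),\ldots,r_{q-1}(\delta))\in\mathbb{N}_0^{q-1}$. For $\mathbf{r}=(r_1,\ldots,r_{q-1})\in\mathbb{N}_0^{q-1}$,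 let $\mu$ be the partition $((q-1)^{r_{q-1}},\ldots,2^{r_2},1^{r_1})$ (having $r_i$ parts equal to $i$) and $\mathscr{W}^{(q)}_{\mathbf{r}}=\{\delta\in\mathscr{C}(\mu):\delta\text{ is }q'\text{-cumulative}\}$. The binomial coefficient $\binom{m}{k}$ is $0$ when $k>m\ge 0$. *)

theory Defs
  imports Complex_Main "HOL-Library.Multiset"
begin

definition is_composition :: "nat list \<Rightarrow> bool" where
  "is_composition \<delta> \<longleftrightarrow> 0 \<notin> set \<delta>"

definition is_partition :: "nat list \<Rightarrow> bool" where
  "is_partition lam \<longleftrightarrow> is_composition lam \<and> sorted_wrt (\<ge>) lam"

definition psum :: "nat list \<Rightarrow> nat \<Rightarrow> nat" where
  "psum \<delta> j = sum_list (take j \<delta>)"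

definition nmult :: "nat \<Rightarrow> nat list \<Rightarrow> nat" where
  "nmult d \<delta> = count (mset \<delta>) d"

definition q_cumulative :: "nat \<Rightarrow> nat list \<Rightarrow> bool" where
  "q_cumulative q \<delta> \<longleftrightarrow> \<delta> \<noteq> [] \<and> (\<forall>j\<in>{1..length \<delta>}. \<not> q dvd psum \<delta> j)"

definition rearr :: "nat list \<Rightarrow> nat list set" where
  "rearr lam = {\<delta>. mset \<delta> = mset lam}"

definition c_count :: "nat \<Rightarrow> nat list \<Rightarrow> nat" where
  "c_count q lam = card {\<delta> \<in> rearr lam. q_cumulative q \<delta>}"

definition rj :: "nat \<Rightarrow> nat \<Rightarrow> nat list \<Rightarrow> nat" where
  "rj q j \<delta> = (\<Sum>i\<in>{i\<in>set \<delta>. i mod q = j mod q}. nmult i \<delta>)"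

text \<open>the vector r(delta) in N^(q-1), represented as a function on indices 1..q-1\<close>
definition rvec :: "nat \<Rightarrow> nat list \<Rightarrow> nat \<Rightarrow> nat" where
  "rvec q \<delta> = (\<lambda>j. if 1 \<le> j \<and> j \<le> q - 1 then rj q j \<delta> else 0)"

definition mu_of :: "nat \<Rightarrow> (nat \<Rightarrow> nat) \<Rightarrow> nat multiset" where
  "mu_of q r = (\<Sum>i\<in>{1..q-1}. replicate_mset (r i) i)"

definition W_set :: "nat \<Rightarrow> (nat \<Rightarrow> nat) \<Rightarrow> nat list set" where
  "W_set q r = {\<delta>. mset \<delta> = mu_of q r \<and> q_cumulative q \<delta>}"

end

theory Submission
  imports Defs "HOL-Combinatorics.Multiset_Permutations"
begin

(* Whether a composition is q'-cumulative depends only on its parts modulo q.  Reducing the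
   parts of a rearrangement of lam modulo q maps the rearrangements onto the words with
   multiset {0^r_0} + mu, and all fibres of this map have the same size; comparing the total
   numbers of rearrangements on both sides shows that this size is prod r_i! / prod n_s!.
   A zero part repeats the previous partial sum, so a word made of r_0 zeros and the parts of
   mu is q'-cumulative iff it does not start with 0 and its nonzero subword is.  Splitting such
   a word into its nonzero subword (an element of W) and the positions of its zeros among the
   last l(lam) - 1 places gives the factor |W| * binom(l(lam) - 1, r_0). *)

lemma finite_mset_eq: "finite {w. mset w = N}"
  using finite_permutations_of_multiset by (simp add: permutations_of_multiset_def)

definition fact_multiplicities :: "'a multiset \<Rightarrow> nat" where
  "fact_multiplicities A = (\<Prod>x\<in>set_mset A. fact (count A x))"

lemma card_mset_eq_mult_fact_multiplicities:
  "card {w. mset w = A} * fact_multiplicities A = fact (size A)"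
  using card_permutations_of_multiset_aux[of A]
  by (simp add: permutations_of_multiset_def fact_multiplicities_def)

lemma card_map_fiber_le:
  assumes "mset v = image_mset g N" and "mset v' = image_mset g N"
  shows "card {w. mset w = N \<and> map g w = v} \<le> card {w. mset w = N \<and> map g w = v'}"
proof -
  obtain p where p: "p permutes {..<length v}" "permute_list p v = v'"
    using assms by (metis mset_eq_permutation)
  have inv: "permute_list (inv p) (permute_list p w) = w"
    if "w \<in> {w. mset w = N \<and> map g w = v}" for w
  proof -
    have "length w = length v"
      using that by auto
    then show ?thesis
      using permute_list_compose[of "inv p" w p] p(1) by (simp add: permutes_inv permutes_inv_o)
  qed
  show ?thesis
  proof (rule card_inj_on_le)
    show "inj_on (permute_list p) {w. mset w = N \<and> map g w = v}"
      using inv by (rule inj_on_inverseI)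
    show "permute_list p ` {w. mset w = N \<and> map g w = v} \<subseteq> {w. mset w = N \<and> map g w = v'}"
    proof
      fix w' assume "w' \<in> permute_list p ` {w. mset w = N \<and> map g w = v}"
      then obtain w where w: "mset w = N" "map g w = v" "w' = permute_list p w"
        by blast
      then have "length w = length v"
        by auto
      then show "w' \<in> {w. mset w = N \<and> map g w = v'}"
        using w p by (simp add: permute_list_map[symmetric])
    qed
    show "finite {w. mset w = N \<and> map g w = v'}"
      by (rule finite_subset[OF _ finite_mset_eq[of N]]) auto
  qed
qed

lemma card_UN_map_fibers:
  assumes "finite V"
  shows "card (\<Union>v\<in>V. {w. mset w = N \<and> map g w = v}) = (\<Sum>v\<in>V. card {w. mset w = N \<and> map g w = v})"
  using assms by (subst card_UN_disjoint) (auto intro: finite_mset_eq[THEN finite_subset[rotated]])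

lemma card_map_fiber:
  assumes "mset v = image_mset g N"
  shows "card {w. mset w = N \<and> map g w = v} * fact_multiplicities N = fact_multiplicities (image_mset g N)"
proof -
  define F where "F v = {w. mset w = N \<and> map g w = v}" for v
  define V where "V = {v. mset v = image_mset g N}"
  have fiber_eq: "card (F v') = card (F v)" if "v' \<in> V" for v'
    using that assms unfolding F_def V_def by (intro antisym card_map_fiber_le) auto
  have "{w. mset w = N} = (\<Union>v'\<in>V. F v')"
    unfolding F_def V_def by auto
  then have "card {w. mset w = N} = (\<Sum>v'\<in>V. card (F v'))"
    unfolding F_def V_def by (simp only: card_UN_map_fibers finite_mset_eq)
  also have "\<dots> = card V * card (F v)"
    using fiber_eq by simp
  finally have "card V * (card (F v) * fact_multiplicities N) = card V * fact_multiplicities (image_mset g N)"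
    using card_mset_eq_mult_fact_multiplicities[of N] card_mset_eq_mult_fact_multiplicities[of "image_mset g N"]
    unfolding V_def by (metis mult.assoc size_image_mset)
  moreover have "V \<noteq> {}"
    using assms unfolding V_def by blast
  then have "card V > 0"
    using finite_mset_eq unfolding V_def by (simp add: card_gt_0_iff)
  ultimately show ?thesis
    unfolding F_def by simp
qed

lemma card_mset_eq_map_pred:
  "card {w. mset w = N \<and> P (map g w)} * fact_multiplicities N
     = card {v. mset v = image_mset g N \<and> P v} * fact_multiplicities (image_mset g N)"
proof -
  define V where "V = {v. mset v = image_mset g N \<and> P v}"
  have "finite V"
    unfolding V_def by (rule finite_subset[OF _ finite_mset_eq[of "image_mset g N"]]) auto
  moreover have "{w. mset w = N \<and> P (map g w)} = (\<Union>v\<in>V. {w. mset w = N \<and> map g w = v})"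
    unfolding V_def by auto
  ultimately have "card {w. mset w = N \<and> P (map g w)} * fact_multiplicities N
      = (\<Sum>v\<in>V. card {w. mset w = N \<and> map g w = v} * fact_multiplicities N)"
    by (simp add: card_UN_map_fibers sum_distrib_right)
  also have "\<dots> = card V * fact_multiplicities (image_mset g N)"
    by (simp add: card_map_fiber V_def)
  finally show ?thesis unfolding V_def .
qed

fun nondvd_prefix_sums :: "nat \<Rightarrow> nat \<Rightarrow> nat list \<Rightarrow> bool" where
  "nondvd_prefix_sums q s [] = True"
| "nondvd_prefix_sums q s (x # xs) \<longleftrightarrow> \<not> q dvd (s + x) \<and> nondvd_prefix_sums q (s + x) xs"

lemma ball_atLeastAtMost_1_Suc:
  "(\<forall>j\<in>{1..Suc n}. P j) \<longleftrightarrow> P 1 \<and> (\<forall>j\<in>{1..n}. P (Suc j))"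
proof -
  have "{1..Suc n} = insert 1 (Suc ` {1..n})"
    by (auto simp: image_iff)
  then show ?thesis
    by (simp del: image_Suc_atLeastAtMost)
qed

lemma nondvd_prefix_sums_iff:
  "nondvd_prefix_sums q s xs \<longleftrightarrow> (\<forall>j\<in>{1..length xs}. \<not> q dvd (s + psum xs j))"
proof (induction xs arbitrary: s)
  case (Cons x xs)
  show ?case
    unfolding length_Cons ball_atLeastAtMost_1_Suc
    using Cons.IH[of "s + x"] by (simp add: psum_def add.assoc)
qed simp

lemma q_cumulative_iff_nondvd_prefix_sums:
  "q_cumulative q xs \<longleftrightarrow> xs \<noteq> [] \<and> nondvd_prefix_sums q 0 xs"
  by (simp add: q_cumulative_def nondvd_prefix_sums_iff)

lemma nondvd_prefix_sums_mod_cong: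
  assumes "s mod q = s' mod q" and "map (\<lambda>x. x mod q) xs = map (\<lambda>x. x mod q) ys"
  shows "nondvd_prefix_sums q s xs = nondvd_prefix_sums q s' ys"
  using assms
proof (induction xs arbitrary: s s' ys)
  case (Cons x xs)
  then obtain y ys' where ys: "ys = y # ys'" "x mod q = y mod q"
    by (cases ys) auto
  then have "(s + x) mod q = (s' + y) mod q"
    using Cons.prems(1) by (metis mod_add_cong)
  then show ?case
    using Cons ys by (simp add: dvd_eq_mod_eq_0)
qed simp

lemma q_cumulative_map_mod: "q_cumulative q (map (\<lambda>x. x mod q) xs) \<longleftrightarrow> q_cumulative q xs"
  using nondvd_prefix_sums_mod_cong[of 0 q 0 "map (\<lambda>x. x mod q) xs" xs]
  by (simp add: q_cumulative_iff_nondvd_prefix_sums)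

lemma nondvd_prefix_sums_filter_nonzero:
  "\<not> q dvd s \<Longrightarrow> nondvd_prefix_sums q s (filter (\<lambda>x. x \<noteq> 0) xs) \<longleftrightarrow> nondvd_prefix_sums q s xs"
  by (induction xs arbitrary: s) auto

lemma q_cumulative_iff_filter_nonzero:
  "q_cumulative q xs \<longleftrightarrow> xs \<noteq> [] \<and> hd xs \<noteq> 0 \<and> q_cumulative q (filter (\<lambda>x. x \<noteq> 0) xs)"
proof (cases xs)
  case (Cons x xs')
  have "\<not> q dvd x \<Longrightarrow> x \<noteq> 0"
    by (rule ccontr) simp
  then show ?thesis
    using Cons nondvd_prefix_sums_filter_nonzero[of q x xs']
    by (auto simp: q_cumulative_iff_nondvd_prefix_sums)
qed (simp add: q_cumulative_def)

(* Inverse of splitting a word into its nonzero subword and its zero mask (True marks a 0). *)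
fun fill_zeros :: "bool list \<Rightarrow> nat list \<Rightarrow> nat list" where
  "fill_zeros [] u = []"
| "fill_zeros (True # b) u = 0 # fill_zeros b u"
| "fill_zeros (False # b) [] = []"
| "fill_zeros (False # b) (x # u) = x # fill_zeros b u"

lemma fill_zeros_filter_mask: "fill_zeros (map (\<lambda>x. x = 0) v) (filter (\<lambda>x. x \<noteq> 0) v) = v"
  by (induction v) auto

context
  fixes b :: "bool list" and u :: "nat list"
  assumes length_u: "count (mset b) False = length u" and nonzero_u: "0 \<notin> set u"
begin

lemma filter_fill_zeros: "filter (\<lambda>x. x \<noteq> 0) (fill_zeros b u) = u"
  using length_u nonzero_u by (induction b u rule: fill_zeros.induct) auto

lemma map_fill_zeros: "map (\<lambda>x. x = 0) (fill_zeros b u) = b"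
  using length_u nonzero_u by (induction b u rule: fill_zeros.induct) auto

lemma mset_fill_zeros: "mset (fill_zeros b u) = replicate_mset (count (mset b) True) 0 + mset u"
  using length_u by (induction b u rule: fill_zeros.induct) auto

end

lemma bij_betw_filter_zero_mask:
  fixes mu :: "nat multiset"
  assumes "0 \<notin># mu"
  shows "bij_betw (\<lambda>v. (filter (\<lambda>x. x \<noteq> 0) v, map (\<lambda>x. x = 0) v))
           {v. mset v = replicate_mset k 0 + mu}
           ({u. mset u = mu} \<times> {b. mset b = replicate_mset k True + replicate_mset (size mu) False})"
    (is "bij_betw ?f ?V (?U \<times> ?B)")
proof (rule bij_betw_byWitness[where f' = "\<lambda>(u, b). fill_zeros b u"])
  show "\<forall>v\<in>?V. (\<lambda>(u, b). fill_zeros b u) (?f v) = v"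
    by (simp add: fill_zeros_filter_mask del: neq0_conv)
  show "\<forall>y\<in>?U \<times> ?B. ?f ((\<lambda>(u, b). fill_zeros b u) y) = y"
    using assms by (auto simp: filter_fill_zeros map_fill_zeros simp del: neq0_conv simp flip: size_mset)
  have "image_mset (\<lambda>x. x = 0) (replicate_mset k 0 + mu) = replicate_mset k True + replicate_mset (size mu) False"
    using assms by (induction mu) auto
  moreover have "filter_mset (\<lambda>x. x \<noteq> 0) (replicate_mset k 0 + mu) = mu"
    using assms by (induction mu) auto
  ultimately show "?f ` ?V \<subseteq> ?U \<times> ?B"
    by auto
  show "(\<lambda>(u, b). fill_zeros b u) ` (?U \<times> ?B) \<subseteq> ?V"
    using assms by (auto simp: mset_fill_zeros simp flip: size_mset)
qed

lemma card_bool_lists_count: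
  "card {b. mset b = replicate_mset k True + replicate_mset n False} = (n + k) choose k"
proof -
  let ?A = "replicate_mset k True + replicate_mset n False"
  have "fact_multiplicities ?A = fact k * fact n"
    unfolding fact_multiplicities_def by (subst prod.mono_neutral_left[of "{True, False}"]) auto
  then have "card {b. mset b = ?A} * (fact k * fact n) = ((n + k) choose k) * (fact k * fact n)"
    using card_mset_eq_mult_fact_multiplicities[of ?A] binomial_fact_lemma[of k "n + k"]
    by (simp add: ac_simps)
  then show ?thesis
    by simp
qed

lemma card_preimage_bij_betw:
  assumes "bij_betw f A A'" and "S \<subseteq> A'"
  shows "card {x \<in> A. f x \<in> S} = card S"
proof -
  have "f ` {x \<in> A. f x \<in> S} = S"
    using assms by (auto simp: bij_betw_def)
  then have "bij_betw f {x \<in> A. f x \<in> S} S"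
    by (intro bij_betw_subset[OF assms(1)]) auto
  then show ?thesis
    by (rule bij_betw_same_card)
qed

lemma bool_lists_hd_False_eq:
  "{b. mset b = replicate_mset k True + replicate_mset (Suc n) False \<and> b \<noteq> [] \<and> \<not> hd b}
     = Cons False ` {b. mset b = replicate_mset k True + replicate_mset n False}"
  by (auto simp: neq_Nil_conv image_iff)

lemma not_q_cumulative_if_all_zero:
  assumes "mset v = replicate_mset k 0"
  shows "\<not> q_cumulative q v"
proof (cases v)
  case (Cons x v')
  then have "x = 0"
    using assms by (metis list.set_intros(1) in_replicate_mset set_mset_mset)
  then show ?thesis
    using Cons by (simp add: q_cumulative_iff_nondvd_prefix_sums)
qed (simp add: q_cumulative_def)

lemma card_q_cumulative_add_zeros:
  fixes mu :: "nat multiset"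
  assumes "0 \<notin># mu"
  shows "card {v. mset v = replicate_mset k 0 + mu \<and> q_cumulative q v}
       = card {u. mset u = mu \<and> q_cumulative q u} * ((size mu + k - 1) choose k)"
proof (cases "size mu")
  case 0
  then have "{v. mset v = replicate_mset k 0 + mu \<and> q_cumulative q v} = {}"
    and "{u. mset u = mu \<and> q_cumulative q u} = {}"
    using not_q_cumulative_if_all_zero[of _ k q] not_q_cumulative_if_all_zero[of _ 0 q] by auto
  then show ?thesis
    by (simp only: card.empty mult_zero_left)
next
  case (Suc n)
  define W where "W = {u. mset u = mu \<and> q_cumulative q u}"
  define B where "B = {b. mset b = replicate_mset k True + replicate_mset (Suc n) False \<and> b \<noteq> [] \<and> \<not> hd b}"
  let ?f = "\<lambda>v. (filter (\<lambda>x. x \<noteq> 0) v, map (\<lambda>x. x = 0) v)"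
  let ?V = "{v. mset v = replicate_mset k 0 + mu}"
  have bij: "bij_betw ?f ?V ({u. mset u = mu} \<times> {b. mset b = replicate_mset k True + replicate_mset (Suc n) False})"
    using bij_betw_filter_zero_mask[OF assms, of k] Suc by simp
  have "q_cumulative q v \<longleftrightarrow> ?f v \<in> W \<times> B" if "v \<in> ?V" for v
    using bij_betw_apply[OF bij that] unfolding q_cumulative_iff_filter_nonzero[of q v] W_def B_def
    by (auto simp: hd_map)
  then have "{v. mset v = replicate_mset k 0 + mu \<and> q_cumulative q v} = {v \<in> ?V. ?f v \<in> W \<times> B}"
    by (auto simp del: neq0_conv)
  also have "card \<dots> = card (W \<times> B)"
    by (intro card_preimage_bij_betw[OF bij]) (auto simp: W_def B_def)
  also have "\<dots> = card W * ((size mu + k - 1) choose k)"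
    unfolding B_def bool_lists_hd_False_eq using Suc
    by (simp add: card_cartesian_product card_image card_bool_lists_count)
  finally show ?thesis
    unfolding W_def .
qed

lemma count_mu_of: "count (mu_of q r) y = (if y \<in> {1..q-1} then r y else 0)"
proof -
  have "count (mu_of q r) y = (\<Sum>i\<in>{1..q-1}. count (replicate_mset (r i) i) y)"
    unfolding mu_of_def by (rule count_sum)
  also have "\<dots> = (\<Sum>i\<in>{1..q-1}. if i = y then r y else 0)"
    by (rule sum.cong) auto
  finally show ?thesis
    by (simp add: sum.delta')
qed

lemma count_image_mod_mset:
  assumes "q \<ge> 1"
  shows "count (image_mset (\<lambda>x. x mod q) (mset xs)) y = (if y < q then rj q y xs else 0)"
proof -
  have "count (image_mset (\<lambda>x. x mod q) (mset xs)) y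
      = (\<Sum>x\<in>(\<lambda>x. x mod q) -` {y} \<inter> set xs. count (mset xs) x)"
    by (simp add: count_image_mset)
  moreover have "(\<lambda>x. x mod q) -` {y} \<inter> set xs = (if y < q then {i \<in> set xs. i mod q = y mod q} else {})"
    using assms by auto
  ultimately show ?thesis
    by (simp add: rj_def nmult_def)
qed

lemma image_mod_mset_eq:
  assumes "q \<ge> 1"
  shows "image_mset (\<lambda>x. x mod q) (mset xs) = replicate_mset (rj q 0 xs) 0 + mu_of q (rvec q xs)"
  using assms by (intro multiset_eqI) (auto simp: count_image_mod_mset count_mu_of rvec_def Suc_le_eq)

lemma fact_multiplicities_image_mod_mset:
  assumes "q \<ge> 1"
  shows "fact_multiplicities (image_mset (\<lambda>x. x mod q) (mset xs)) = (\<Prod>i\<in>{0..q-1}. fact (rj q i xs))"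
proof -
  let ?R = "image_mset (\<lambda>x. x mod q) (mset xs)"
  have "set_mset ?R \<subseteq> {0..q-1}"
    using assms by (auto simp: less_Suc_eq_le[symmetric])
  then have "fact_multiplicities ?R = (\<Prod>i\<in>{0..q-1}. fact (count ?R i))"
    unfolding fact_multiplicities_def by (intro prod.mono_neutral_left) (auto simp: not_in_iff simp del: set_image_mset)
  also have "\<dots> = (\<Prod>i\<in>{0..q-1}. fact (rj q i xs))"
    using assms by (intro prod.cong) (auto simp: count_image_mod_mset)
  finally show ?thesis .
qed

lemma length_eq_rj_0_plus_size_mu_of:
  assumes "q \<ge> 1"
  shows "length xs = rj q 0 xs + size (mu_of q (rvec q xs))"
  using arg_cong[OF image_mod_mset_eq[OF assms, of xs], of size] by simp

lemma c_count_mult_fact_multiplicities: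
  assumes "q \<ge> 1"
  shows "c_count q lam * (\<Prod>s\<in>set lam. fact (nmult s lam))
       = card (W_set q (rvec q lam)) * ((length lam - 1) choose rj q 0 lam) * (\<Prod>i\<in>{0..q-1}. fact (rj q i lam))"
proof -
  let ?R = "image_mset (\<lambda>x. x mod q) (mset lam)"
  let ?mu = "mu_of q (rvec q lam)"
  have "0 \<notin># ?mu"
    by (simp add: count_mu_of not_in_iff)
  then have zeros: "card {v. mset v = ?R \<and> q_cumulative q v}
      = card (W_set q (rvec q lam)) * ((length lam - 1) choose rj q 0 lam)"
    using card_q_cumulative_add_zeros[of ?mu "rj q 0 lam" q]
    by (simp add: image_mod_mset_eq[OF assms] length_eq_rj_0_plus_size_mu_of[OF assms] W_set_def add.commute)
  have "c_count q lam = card {w. mset w = mset lam \<and> q_cumulative q (map (\<lambda>x. x mod q) w)}"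
    by (simp add: c_count_def rearr_def q_cumulative_map_mod)
  then have "c_count q lam * fact_multiplicities (mset lam)
      = card {v. mset v = ?R \<and> q_cumulative q v} * fact_multiplicities ?R"
    by (simp add: card_mset_eq_map_pred)
  moreover have "fact_multiplicities (mset lam) = (\<Prod>s\<in>set lam. fact (nmult s lam))"
    by (simp add: fact_multiplicities_def nmult_def)
  ultimately show ?thesis
    by (simp only: zeros fact_multiplicities_image_mod_mset[OF assms])
qed

lemma rj_0_less_length_if_W_set_nonempty:
  assumes "q \<ge> 1" and "W_set q (rvec q xs) \<noteq> {}"
  shows "rj q 0 xs < length xs"
proof -
  obtain u where "mset u = mu_of q (rvec q xs)" "q_cumulative q u"
    using assms(2) unfolding W_set_def by blast
  then have "size (mu_of q (rvec q xs)) > 0"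
    by (metis q_cumulative_def length_greater_0_conv size_mset)
  then show ?thesis
    using length_eq_rj_0_plus_size_mu_of[OF assms(1), of xs] by simp
qed

theorem proposition1:
  fixes q :: nat and lam :: "nat list"
  assumes "q \<ge> 1" and "is_partition lam"
  shows "real (c_count q lam) =
           real (card (W_set q (rvec q lam)))
           * (real (\<Prod>i\<in>{0..q-1}. fact (rj q i lam) :: nat) / real (\<Prod>s\<in>set lam. fact (nmult s lam) :: nat))
           * real ((length lam - 1) choose (rj q 0 lam))
       \<and> (c_count q lam \<noteq> 0 \<longleftrightarrow> W_set q (rvec q lam) \<noteq> {})"
proof -
  define W where "W = W_set q (rvec q lam)"
  define C where "C = (length lam - 1) choose rj q 0 lam"
  define Pr where "Pr = (\<Prod>i\<in>{0..q-1}. fact (rj q i lam) :: nat)"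
  define Pn where "Pn = (\<Prod>s\<in>set lam. fact (nmult s lam) :: nat)"
  have count_eq: "c_count q lam * Pn = card W * C * Pr"
    unfolding W_def C_def Pr_def Pn_def using assms(1) by (rule c_count_mult_fact_multiplicities)
  have "Pn > 0" "Pr > 0"
    unfolding Pn_def Pr_def by (simp_all add: prod_pos)
  then have "c_count q lam \<noteq> 0 \<longleftrightarrow> card W * C \<noteq> 0"
    using count_eq by (metis mult_is_0 not_gr0)
  moreover have "finite W"
    unfolding W_def W_set_def by (rule finite_subset[OF _ finite_mset_eq]) auto
  moreover have "W \<noteq> {} \<Longrightarrow> C > 0"
    unfolding W_def C_def using rj_0_less_length_if_W_set_nonempty[OF assms(1), of lam] by simp
  ultimately have "c_count q lam \<noteq> 0 \<longleftrightarrow> W \<noteq> {}"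
    by force
  moreover have "real (c_count q lam) = real (card W) * (real Pr / real Pn) * real C"
    using arg_cong[OF count_eq, of real] \<open>Pn > 0\<close> by (simp add: field_simps)
  ultimately show ?thesis
    unfolding W_def C_def Pr_def Pn_def by blast
qed

end
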